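(* Let $\mathcal{A}=\{n\in\mathbb{N}_{\ge1} : V(n+1)/V(n)>1\}$ and $\mathcal{B}=\{n\in\mathbb{N}_{\ge1} : V(n+1)/V(n)<1\}$ (both sets are infinite). Then $$\liminf_{n\to\infty,\ n\in\mathcal{A}}\frac{V(n+1)}{V(n)}=1 \quad\text{and}\quad \limsup_{n\to\infty,\ n\in\mathcal{B}}\frac{V(n+1)}{V(n)}=1.$$
   Context: For a positive integer $n$, an integer $a$ is called regular modulo $n$ if there exists an integer $x$ with $a^2x\equiv a \pmod n$. Let $V(n)$ denote the number of integers $a$ with $1\le a\le n$ that are regular modulo $n$. (Known fact: $V$ is multiplicative, $V(1)=1$, and $V(p^{\alpha})=p^{\alpha}-p^{\alpha-1}+1$ for a prime $p$ and $\alpha\ge1$.) *)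

theory Defs
  imports "HOL-Analysis.Analysis" "HOL-Number_Theory.Cong"
begin

definition regular_mod :: "int \<Rightarrow> nat \<Rightarrow> bool" where
  "regular_mod a n \<longleftrightarrow> (\<exists>x::int. [a^2 * x = a] (mod int n))"

definition V :: "nat \<Rightarrow> nat" where
  "V n = card {a::int. 1 \<le> a \<and> a \<le> int n \<and> regular_mod a n}"

definition setA :: "nat set" where
  "setA = {n. n \<ge> 1 \<and> real (V (n+1)) / real (V n) > 1}"

definition setB :: "nat set" where
  "setB = {n. n \<ge> 1 \<and> real (V (n+1)) / real (V n) < 1}"

end

theory Submission
  imports Defs "HOL-Computational_Algebra.Computational_Algebra"
begin

(*
  Modulo a squarefree n every residue is regular, so V n = n. Hence the ratio
  V (n + 1) / V n equals 1 + 1/n whenever n and n + 1 are both squarefree. For a prime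
  p \<ge> 3 and squarefree m with p\<^sup>2 m - 1 squarefree, the residues prime to p are
  regular modulo p\<^sup>2 m while p and 2p are not, so the ratio at n = p\<^sup>2 m - 1 lies in
  [1 - 1/p, 1). Both families are infinite by an elementary sieve: for an affine
  progression a m + c with a, c coprime, at most 35/72 X + O(\<surd>X) of the m < X make
  a m + c non-squarefree, since the sum of 1/q\<^sup>2 over primes q is below 35/72 < 1/2;
  so two such progressions cannot exclude all large m.
*)

lemma squarefree_of_nat_int:
  assumes "squarefree n"
  shows "squarefree (int n)"
proof (rule squarefreeI)
  fix x :: int
  assume "x\<^sup>2 dvd int n"
  then have "(nat \<bar>x\<bar>)\<^sup>2 dvd n"
    by (metis int_dvd_int_iff nat_0_le abs_ge_zero power2_abs of_nat_power)
  then have "nat \<bar>x\<bar> dvd 1"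
    using squarefreeD[OF assms] by blast
  then show "x dvd 1"
    by simp
qed

lemma squarefree_dvd_square_imp_dvd:
  fixes d a :: "'a :: semiring_gcd"
  assumes "squarefree d" and "d dvd a\<^sup>2"
  shows "d dvd a"
proof -
  define g where "g = gcd d a"
  have "d \<noteq> 0"
    using assms(1) by auto
  then have "g \<noteq> 0"
    by (simp add: g_def)
  then obtain d' a' where d: "d = d' * g" and a: "a = a' * g" and "coprime d' a'"
    using gcd_coprime_exists unfolding g_def by blast
  have "d' * g dvd (a' * (a' * g)) * g"
    using assms(2) d a by (simp add: power2_eq_square ac_simps)
  then have "d' dvd a' * (a' * g)"
    using \<open>g \<noteq> 0\<close> by simp
  then have "d' dvd g"
    using \<open>coprime d' a'\<close> by (simp add: coprime_dvd_mult_right_iff)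
  then have "d'\<^sup>2 dvd d"
    by (simp add: d power2_eq_square mult_dvd_mono)
  then have "is_unit d'"
    using squarefreeD[OF assms(1)] by blast
  then have "d dvd g"
    by (simp add: d mult_unit_dvd_iff')
  then show ?thesis
    unfolding g_def using dvd_trans gcd_dvd2 by blast
qed

lemma regular_mod_if_gcd_dvd:
  assumes "gcd (a\<^sup>2) (int n) dvd a"
  shows "regular_mod a n"
proof -
  obtain u v where uv: "u * a\<^sup>2 + v * int n = gcd (a\<^sup>2) (int n)"
    using bezout_int by blast
  obtain t where "a = gcd (a\<^sup>2) (int n) * t"
    using assms by blast
  then have "a\<^sup>2 * (u * t) - a = int n * (- v * t)"
    unfolding uv[symmetric] by (simp add: algebra_simps)
  then have "int n dvd a\<^sup>2 * (u * t) - a"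
    by simp
  then have "[a\<^sup>2 * (u * t) = a] (mod int n)"
    by (simp add: cong_iff_dvd_diff)
  then show ?thesis
    unfolding regular_mod_def by blast
qed

lemma regular_mod_squarefree:
  assumes "squarefree n"
  shows "regular_mod a n"
proof (rule regular_mod_if_gcd_dvd, rule squarefree_dvd_square_imp_dvd)
  show "squarefree (gcd (a\<^sup>2) (int n))"
    by (rule squarefree_mono[OF gcd_dvd2 squarefree_of_nat_int[OF assms]])
qed simp

lemma regular_mod_prime_square_mult:
  assumes "prime p" and "squarefree m" and "\<not> int p dvd a"
  shows "regular_mod a (p\<^sup>2 * m)"
proof (rule regular_mod_if_gcd_dvd)
  define g where "g = gcd (a\<^sup>2) (int (p\<^sup>2 * m))"
  have "coprime (int p) a"
    using assms(1,3) by (simp add: prime_imp_coprime)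
  then have "coprime (a\<^sup>2) ((int p)\<^sup>2)"
    by (simp add: coprime_commute)
  then have "coprime g ((int p)\<^sup>2)"
    unfolding g_def by (rule coprime_divisors[OF gcd_dvd1 dvd_refl])
  moreover have "g dvd (int p)\<^sup>2 * int m"
    by (simp add: g_def)
  ultimately have "g dvd int m"
    by (simp add: coprime_dvd_mult_right_iff)
  then have "squarefree g"
    using squarefree_mono squarefree_of_nat_int[OF assms(2)] by blast
  then show "g dvd a"
    by (rule squarefree_dvd_square_imp_dvd) (simp add: g_def)
qed

lemma square_dvd_if_regular_mod:
  fixes q :: int
  assumes "q\<^sup>2 dvd int n" and "q dvd a" and "regular_mod a n"
  shows "q\<^sup>2 dvd a"
proof -
  obtain x where "int n dvd a\<^sup>2 * x - a"
    using assms(3) unfolding regular_mod_def by (auto simp: cong_iff_dvd_diff)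
  then have "q\<^sup>2 dvd a\<^sup>2 * x - a"
    using assms(1) dvd_trans by blast
  moreover have "q\<^sup>2 dvd a\<^sup>2 * x"
    using assms(2) by (simp add: dvd_power_same)
  ultimately have "q\<^sup>2 dvd a\<^sup>2 * x - (a\<^sup>2 * x - a)"
    by (rule dvd_diff[rotated])
  then show ?thesis
    by simp
qed

lemma V_altdef: "V n = card {a \<in> {1..int n}. regular_mod a n}"
  unfolding V_def by (rule arg_cong[where f = card]) auto

lemma V_squarefree:
  assumes "squarefree n"
  shows "V n = n"
proof -
  have "{a \<in> {1..int n}. regular_mod a n} = {1..int n}"
    using regular_mod_squarefree[OF assms] by blast
  then show ?thesis
    unfolding V_altdef by simp
qed

lemma V_prime_square_mult_le:
  assumes "prime p" and "3 \<le> p" and "0 < m"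
  shows "V (p\<^sup>2 * m) \<le> p\<^sup>2 * m - 2"
proof -
  define n where "n = p\<^sup>2 * m"
  have "2 * p \<le> p\<^sup>2"
    using assms(2) by (simp add: power2_eq_square)
  also have "p\<^sup>2 \<le> n"
    using assms(3) by (simp add: n_def)
  finally have "2 * p \<le> n" .
  have not_regular: "\<not> regular_mod (k * int p) n" if "k \<in> {1, 2}" for k
  proof
    assume "regular_mod (k * int p) n"
    then have "(int p)\<^sup>2 dvd k * int p"
      by (rule square_dvd_if_regular_mod[rotated 2]) (auto simp: n_def)
    moreover have "0 < k * int p" and "k * int p < (int p)\<^sup>2"
      using that assms(2) by (auto simp: power2_eq_square)
    ultimately show False
      using zdvd_not_zless by blast
  qed
  have "{a \<in> {1..int n}. regular_mod a n} \<subseteq> {1..int n} - {int p, 2 * int p}"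
    using not_regular[of 1] not_regular[of 2] by auto
  then have "V n \<le> card ({1..int n} - {int p, 2 * int p})"
    unfolding V_altdef by (intro card_mono) simp_all
  also have "\<dots> = n - 2"
  proof -
    have "{int p, 2 * int p} \<subseteq> {1..int n}"
      using \<open>2 * p \<le> n\<close> assms(2) by auto
    then show ?thesis
      using assms(2) by (simp add: card_Diff_subset)
  qed
  finally show ?thesis
    by (simp add: n_def)
qed

lemma V_prime_square_mult_ge:
  assumes "prime p" and "squarefree m"
  shows "p\<^sup>2 * m - p * m \<le> V (p\<^sup>2 * m)"
proof -
  define n where "n = p\<^sup>2 * m"
  define M where "M = {a \<in> {1..int n}. int p dvd a}"
  have M_sub: "M \<subseteq> (\<lambda>k. int p * k) ` {1..int (p * m)}"
  proof
    fix a
    assume "a \<in> M"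
    then obtain k where a: "a = int p * k" and "1 \<le> a" and "a \<le> int p * int (p * m)"
      by (auto simp: M_def n_def power2_eq_square elim!: dvdE)
    moreover have "0 < int p"
      using assms(1) by (simp add: prime_gt_0_nat)
    moreover from a \<open>1 \<le> a\<close> have "0 < int p * k"
      by simp
    ultimately have "k \<in> {1..int (p * m)}"
      by (auto simp: zero_less_mult_iff)
    then show "a \<in> (\<lambda>k. int p * k) ` {1..int (p * m)}"
      using a by blast
  qed
  then have "card M \<le> card ((\<lambda>k. int p * k) ` {1..int (p * m)})"
    by (intro card_mono) simp_all
  also have "\<dots> \<le> p * m"
    using card_image_le[of "{1..int (p * m)}" "\<lambda>k. int p * k"] by (simp del: of_nat_mult)
  finally have "card M \<le> p * m" .
  have "{1..int n} - M \<subseteq> {a \<in> {1..int n}. regular_mod a n}"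
    using regular_mod_prime_square_mult[OF assms] by (auto simp: M_def n_def)
  then have "card ({1..int n} - M) \<le> V n"
    unfolding V_altdef by (rule card_mono[rotated]) (auto intro: finite_subset[of _ "{1..int n}"])
  moreover have "card {1..int n} - card M \<le> card ({1..int n} - M)"
    by (rule diff_card_le_card_Diff) (simp add: finite_subset[OF M_sub])
  moreover have "card {1..int n} = n"
    by simp
  ultimately have "n - p * m \<le> V n"
    using \<open>card M \<le> p * m\<close> by linarith
  then show ?thesis
    by (simp add: n_def)
qed

lemma card_dvd_affine_le:
  fixes a c q X :: nat
  assumes "0 < q" and "coprime a q"
  shows "card {m \<in> {..<X}. q dvd a * m + c} \<le> X div q + 1"
proof -
  define S where "S = {m \<in> {..<X}. q dvd a * m + c}"
  have "inj_on (\<lambda>m. m div q) S"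
  proof (rule inj_onI)
    fix m m'
    assume "m \<in> S" and "m' \<in> S" and div_eq: "m div q = m' div q"
    then have "[a * m + c = a * m' + c] (mod q)"
      by (auto simp: S_def cong_def dvd_eq_mod_eq_0)
    then have "[m = m'] (mod q)"
      using assms(2) by (simp add: cong_add_rcancel_nat cong_mult_lcancel_nat)
    then have "m mod q = m' mod q"
      by (simp add: cong_def)
    then show "m = m'"
      using div_eq by (metis div_mult_mod_eq)
  qed
  moreover have "(\<lambda>m. m div q) ` S \<subseteq> {..X div q}"
    by (auto simp: S_def intro: div_le_mono)
  ultimately have "card S \<le> card {..X div q}"
    using card_image card_mono[OF finite_atMost] by metis
  then show ?thesis
    by (simp add: S_def)
qed

lemma card_square_le_sqrt: "real (card {q :: nat. q * q \<le> K}) \<le> sqrt K + 1"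
proof -
  define s where "s = nat \<lfloor>sqrt K\<rfloor>"
  have "{q :: nat. q * q \<le> K} \<subseteq> {..s}"
  proof
    fix q
    assume "q \<in> {q :: nat. q * q \<le> K}"
    then have "(real q)\<^sup>2 \<le> real K"
      by (simp add: power2_eq_square flip: of_nat_mult)
    then have "real q \<le> sqrt K"
      by (rule real_le_rsqrt)
    then show "q \<in> {..s}"
      by (simp add: s_def le_nat_floor)
  qed
  then have "card {q :: nat. q * q \<le> K} \<le> s + 1"
    using card_mono[OF finite_atMost] by fastforce
  moreover have "real s \<le> sqrt K"
    by (simp add: s_def)
  ultimately show ?thesis
    by linarith
qed

lemma sum_inverse_odd_squares_le:
  assumes "1 \<le> j"
  shows "(\<Sum>i = 1..j. 1 / (real (2 * i + 1))\<^sup>2) \<le> 17 / 72 - 1 / (4 * (real j + 1))"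
  using assms
proof (induction j rule: dec_induct)
  case base
  then show ?case
    by simp
next
  case (step j)
  have "4 * (real j + 1) * (real j + 2) \<le> (real (2 * Suc j + 1))\<^sup>2"
    by (simp add: power2_eq_square algebra_simps)
  then have "1 / (real (2 * Suc j + 1))\<^sup>2 \<le> 1 / (4 * (real j + 1) * (real j + 2))"
    by (intro divide_left_mono) auto
  also have "\<dots> = 1 / (4 * (real j + 1)) - 1 / (4 * (real (Suc j) + 1))"
    by (simp add: divide_simps)
  finally show ?case
    using step.IH by simp
qed

lemma sum_inverse_square_primes_le:
  assumes "finite P" and "\<forall>q \<in> P. prime (q :: nat)"
  shows "(\<Sum>q \<in> P. 1 / (real q)\<^sup>2) \<le> 35 / 72"
proof -
  obtain B where B: "\<forall>q \<in> P. q \<le> B"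
    using assms(1) finite_nat_set_iff_bounded_le by blast
  define odd_nat where "odd_nat = (\<lambda>i :: nat. 2 * i + 1)"
  have "P \<subseteq> insert 2 (odd_nat ` {1..Suc B})"
  proof
    fix q
    assume "q \<in> P"
    show "q \<in> insert 2 (odd_nat ` {1..Suc B})"
    proof (cases "q = 2")
      case False
      with \<open>q \<in> P\<close> assms(2) have "2 < q"
        using prime_ge_2_nat le_neq_implies_less by metis
      with \<open>q \<in> P\<close> assms(2) have "odd q"
        using prime_odd_nat by blast
      then obtain i where i: "q = 2 * i + 1"
        by (rule oddE)
      moreover have "i \<in> {1..Suc B}"
        using i \<open>2 < q\<close> \<open>q \<in> P\<close> B by fastforce
      ultimately show ?thesis
        by (auto simp: odd_nat_def)
    qed simp
  qed
  then have "(\<Sum>q \<in> P. 1 / (real q)\<^sup>2) \<le> (\<Sum>q \<in> insert 2 (odd_nat ` {1..Suc B}). 1 / (real q)\<^sup>2)"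
    by (intro sum_mono2) auto
  also have "\<dots> = 1 / 4 + (\<Sum>i = 1..Suc B. 1 / (real (2 * i + 1))\<^sup>2)"
    by (subst sum.insert) (auto simp: odd_nat_def sum.reindex inj_on_def)
  also have "\<dots> \<le> 1 / 4 + (17 / 72 - 1 / (4 * (real (Suc B) + 1)))"
    using sum_inverse_odd_squares_le[of "Suc B"] by simp
  also have "\<dots> \<le> 35 / 72"
    by simp
  finally show ?thesis .
qed

lemma card_square_dvd_affine_le:
  fixes a c q X :: nat
  assumes "prime q" and "coprime a c"
  shows "real (card {m \<in> {..<X}. q\<^sup>2 dvd a * m + c}) \<le> real X / (real q)\<^sup>2 + 1"
proof (cases "coprime a q")
  case True
  then have "card {m \<in> {..<X}. q\<^sup>2 dvd a * m + c} \<le> X div q\<^sup>2 + 1"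
    using assms(1) by (intro card_dvd_affine_le) (auto simp: prime_gt_0_nat)
  moreover have "real (X div q\<^sup>2) \<le> real X / (real q)\<^sup>2"
    using of_nat_div_le_of_nat[of X "q\<^sup>2"] by simp
  ultimately show ?thesis
    by linarith
next
  case False
  then have "q dvd a"
    using assms(1) by (metis coprime_commute prime_imp_coprime)
  then have "\<not> q dvd c"
    using assms by (metis coprime_common_divisor not_prime_unit)
  then have "\<not> q dvd a * m + c" for m
    using \<open>q dvd a\<close> by (simp add: dvd_add_right_iff)
  moreover have "q dvd q\<^sup>2"
    by (simp add: power2_eq_square)
  ultimately have "{m \<in> {..<X}. q\<^sup>2 dvd a * m + c} = {}"
    using dvd_trans by blast
  then show ?thesis
    by (simp only: card.empty) simp
qed

lemma card_not_squarefree_affine_le: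
  fixes a c X :: nat
  assumes "1 \<le> c" and "coprime a c"
  shows "real (card {m \<in> {..<X}. \<not> squarefree (a * m + c)}) \<le> 35 / 72 * X + sqrt (a * X + c) + 1"
proof -
  define K where "K = a * X + c"
  define P where "P = {q :: nat. prime q \<and> q * q \<le> K}"
  define S where "S = (\<lambda>q. {m \<in> {..<X}. q\<^sup>2 dvd a * m + c})"
  have "finite P"
    unfolding P_def by (rule finite_subset[of _ "{..K}"]) (auto intro: order.trans[OF le_square])
  have bad_sub: "{m \<in> {..<X}. \<not> squarefree (a * m + c)} \<subseteq> (\<Union>q \<in> P. S q)"
  proof
    fix m
    assume m: "m \<in> {m \<in> {..<X}. \<not> squarefree (a * m + c)}"
    have "a * m + c \<noteq> 0"
      using assms(1) by simp
    then obtain q where q: "prime q" "q\<^sup>2 dvd a * m + c"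
      using m squarefree_factorial_semiring[OF \<open>a * m + c \<noteq> 0\<close>] by auto
    then have "q * q \<le> a * m + c"
      using \<open>a * m + c \<noteq> 0\<close> by (simp add: dvd_imp_le power2_eq_square)
    also have "\<dots> \<le> K"
      using m by (simp add: K_def)
    finally show "m \<in> (\<Union>q \<in> P. S q)"
      using m q by (auto simp: P_def S_def)
  qed
  have "card {m \<in> {..<X}. \<not> squarefree (a * m + c)} \<le> card (\<Union>q \<in> P. S q)"
    using bad_sub by (rule card_mono[rotated]) (auto simp: S_def \<open>finite P\<close>)
  also have "\<dots> \<le> (\<Sum>q \<in> P. card (S q))"
    by (rule card_UN_le[OF \<open>finite P\<close>])
  finally have "real (card {m \<in> {..<X}. \<not> squarefree (a * m + c)}) \<le> (\<Sum>q \<in> P. real (card (S q)))"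
    by (simp flip: of_nat_sum)
  also have "\<dots> \<le> (\<Sum>q \<in> P. real X / (real q)\<^sup>2 + 1)"
    unfolding S_def using card_square_dvd_affine_le[OF _ assms(2)] by (intro sum_mono) (simp add: P_def)
  also have "\<dots> = real X * (\<Sum>q \<in> P. 1 / (real q)\<^sup>2) + card P"
    by (simp add: sum.distrib sum_distrib_left)
  also have "\<dots> \<le> real X * (35 / 72) + (sqrt K + 1)"
  proof (rule add_mono)
    show "real X * (\<Sum>q \<in> P. 1 / (real q)\<^sup>2) \<le> real X * (35 / 72)"
      using sum_inverse_square_primes_le[OF \<open>finite P\<close>] by (intro mult_left_mono) (auto simp: P_def)
    have "card P \<le> card {q :: nat. q * q \<le> K}"
      by (rule card_mono) (auto simp: P_def intro: finite_subset[of _ "{..K}"] order.trans[OF le_square])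
    then show "real (card P) \<le> sqrt K + 1"
      using card_square_le_sqrt[of K] by linarith
  qed
  finally show ?thesis
    by (simp add: K_def)
qed

lemma exists_nat_linear_less_quadratic:
  fixes A B c :: real
  assumes "0 < c"
  shows "\<exists>K :: nat. 1 \<le> K \<and> A + B * K < c * (real K)\<^sup>2"
proof -
  define K where "K = nat \<lceil>(\<bar>A\<bar> + \<bar>B\<bar> + 1) / c\<rceil> + 1"
  have "1 \<le> K"
    by (simp add: K_def)
  have "(\<bar>A\<bar> + \<bar>B\<bar> + 1) / c \<le> K"
    unfolding K_def by linarith
  then have "\<bar>A\<bar> + \<bar>B\<bar> + 1 \<le> c * K"
    using assms by (simp add: divide_le_eq mult.commute)
  from mult_right_mono[OF this, of "real K"]
  have "(\<bar>A\<bar> + \<bar>B\<bar> + 1) * K \<le> c * (real K)\<^sup>2"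
    by (simp add: power2_eq_square mult.assoc)
  moreover have "A + B * K < (\<bar>A\<bar> + \<bar>B\<bar> + 1) * K"
  proof -
    have "A \<le> \<bar>A\<bar> * K"
      using \<open>1 \<le> K\<close> mult_left_mono[of 1 "real K" "\<bar>A\<bar>"] by simp
    moreover have "B * K \<le> \<bar>B\<bar> * K"
      by (rule mult_right_mono) simp_all
    moreover have "(\<bar>A\<bar> + \<bar>B\<bar> + 1) * K = \<bar>A\<bar> * K + \<bar>B\<bar> * K + K"
      by (simp add: algebra_simps)
    ultimately show ?thesis
      using \<open>1 \<le> K\<close> by linarith
  qed
  ultimately show ?thesis
    using \<open>1 \<le> K\<close> by (intro exI[of _ K]) simp
qed

lemma sqrt_affine_square_le:
  fixes e f K :: nat
  assumes "1 \<le> K"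
  shows "sqrt (e * K\<^sup>2 + f) \<le> sqrt (e + f) * K"
proof -
  have "1 \<le> (real K)\<^sup>2"
    using assms by simp
  from mult_left_mono[OF this, of "real f"]
  have "real (e * K\<^sup>2 + f) \<le> real (e + f) * (real K)\<^sup>2"
    by (simp add: algebra_simps)
  then have "sqrt (e * K\<^sup>2 + f) \<le> sqrt (real (e + f) * (real K)\<^sup>2)"
    by (rule real_sqrt_le_mono)
  also have "\<dots> = sqrt (e + f) * K"
    by (simp add: real_sqrt_mult)
  finally show ?thesis .
qed

lemma exists_squarefree_affine_pair:
  fixes a b c d N :: nat
  assumes "1 \<le> c" "coprime a c" and "1 \<le> d" "coprime b d"
  shows "\<exists>m \<ge> N. squarefree (a * m + c) \<and> squarefree (b * m + d)"
proof -
  obtain K :: nat where "1 \<le> K"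
    and K: "real N + 2 + (sqrt (a + c) + sqrt (b + d)) * K < 1 / 36 * (real K)\<^sup>2"
    using exists_nat_linear_less_quadratic[of "1 / 36" "real N + 2" "sqrt (a + c) + sqrt (b + d)"]
    by auto
  define X where "X = K\<^sup>2"
  define bad where "bad = (\<lambda>e f. {m \<in> {..<X}. \<not> squarefree (e * m + f)})"
  have "real (card (bad a c)) + real (card (bad b d)) + real N < real X"
  proof -
    have "real X = (real K)\<^sup>2"
      by (simp add: X_def)
    moreover have "real N + 2 + sqrt (a + c) * K + sqrt (b + d) * K < 1 / 36 * (real K)\<^sup>2"
      using K by (simp add: distrib_right)
    ultimately show ?thesis
      using card_not_squarefree_affine_le[OF assms(1,2), of X] card_not_squarefree_affine_le[OF assms(3,4), of X]
        sqrt_affine_square_le[OF \<open>1 \<le> K\<close>, of a c] sqrt_affine_square_le[OF \<open>1 \<le> K\<close>, of b d]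
      unfolding bad_def X_def by linarith
  qed
  then have "card (bad a c) + card (bad b d) + N < X"
    by (simp only: of_nat_add[symmetric] of_nat_less_iff)
  moreover have "card (bad a c \<union> bad b d \<union> {..<N}) \<le> card (bad a c) + card (bad b d) + N"
    using card_Un_le[of "bad a c \<union> bad b d" "{..<N}"] card_Un_le[of "bad a c" "bad b d"]
    by simp
  ultimately have "card (bad a c \<union> bad b d \<union> {..<N}) < card {..<X}"
    by simp
  then have "\<not> {..<X} \<subseteq> bad a c \<union> bad b d \<union> {..<N}"
    using card_mono[of "bad a c \<union> bad b d \<union> {..<N}" "{..<X}"] by (auto simp: bad_def)
  then obtain m where "m \<in> {..<X}" and "m \<notin> bad a c \<union> bad b d \<union> {..<N}"
    by blast
  then show ?thesis
    by (auto simp: bad_def not_less)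
qed

lemma squarefree_consecutive_unbounded: "\<exists>n \<ge> (N :: nat). squarefree n \<and> squarefree (n + 1)"
proof -
  obtain m :: nat where "N \<le> m" "squarefree (1 * m + 1)" "squarefree (1 * m + 2)"
    using exists_squarefree_affine_pair[where a = 1 and c = 1 and b = 1 and d = 2] by auto
  then show ?thesis
    by (intro exI[of _ "m + 1"]) (simp add: add.assoc)
qed

lemma squarefree_pred_prime_square_mult_unbounded:
  fixes p N :: nat
  assumes "prime p"
  shows "\<exists>m \<ge> N. squarefree m \<and> squarefree (p\<^sup>2 * m - 1)"
proof -
  have "1 < p\<^sup>2"
    using one_less_power[OF prime_gt_1_nat[OF assms], of 2] by simp
  then have "coprime (p\<^sup>2) (p\<^sup>2 - 1)"
    by (intro coprime_diff_one_right_nat) linarith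
  then have "\<exists>m \<ge> N. squarefree (1 * m + 1) \<and> squarefree (p\<^sup>2 * m + (p\<^sup>2 - 1))"
    using \<open>1 < p\<^sup>2\<close> by (intro exists_squarefree_affine_pair) auto
  then obtain m where "N \<le> m" "squarefree (m + 1)" "squarefree (p\<^sup>2 * m + (p\<^sup>2 - 1))"
    by auto
  moreover have "p\<^sup>2 * (m + 1) - 1 = p\<^sup>2 * m + (p\<^sup>2 - 1)"
    using \<open>1 < p\<^sup>2\<close> by simp
  ultimately show ?thesis
    by (intro exI[of _ "m + 1"]) simp
qed

definition V_ratio :: "nat \<Rightarrow> real" where
  "V_ratio n = real (V (n + 1)) / real (V n)"

lemma mem_setA_iff: "n \<in> setA \<longleftrightarrow> 1 \<le> n \<and> 1 < V_ratio n"
  by (simp add: setA_def V_ratio_def)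

lemma mem_setB_iff: "n \<in> setB \<longleftrightarrow> 1 \<le> n \<and> V_ratio n < 1"
  by (simp add: setB_def V_ratio_def)

lemma V_ratio_squarefree_pair:
  assumes "squarefree n" and "squarefree (n + 1)"
  shows "V_ratio n = 1 + 1 / real n"
proof -
  have "n \<noteq> 0"
    by (rule notI) (use assms(1) in simp)
  then show ?thesis
    unfolding V_ratio_def V_squarefree[OF assms(1)] V_squarefree[OF assms(2)] by (simp add: field_simps)
qed

lemma V_ratio_pred_prime_square_mult:
  assumes "prime p" and "3 \<le> p" and "squarefree m" and "squarefree (p\<^sup>2 * m - 1)"
  shows "1 - 1 / real p \<le> V_ratio (p\<^sup>2 * m - 1)" and "V_ratio (p\<^sup>2 * m - 1) < 1"
proof -
  define n where "n = p\<^sup>2 * m - 1"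
  have "m \<noteq> 0"
    by (rule notI) (use assms(3) in simp)
  then have "0 < m"
    by simp
  have "9 \<le> p\<^sup>2"
    using power_mono[OF assms(2), of 2] by simp
  then have "9 * 1 \<le> p\<^sup>2 * m"
    using \<open>0 < m\<close> by (intro mult_le_mono) auto
  then have n1: "n + 1 = p\<^sup>2 * m"
    by (simp add: n_def)
  have Vn: "V n = n"
    using V_squarefree[OF assms(4)] by (simp add: n_def)
  have upper: "V (n + 1) \<le> n - 1"
    using V_prime_square_mult_le[OF assms(1,2) \<open>0 < m\<close>] n1 by simp
  have lower: "p\<^sup>2 * m - p * m \<le> V (n + 1)"
    using V_prime_square_mult_ge[OF assms(1,3)] n1 by simp
  show "V_ratio (p\<^sup>2 * m - 1) < 1"
    unfolding n_def[symmetric] V_ratio_def Vn using upper \<open>9 * 1 \<le> p\<^sup>2 * m\<close> n1 by simp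
  have "0 < real p"
    using assms(2) by simp
  then have "1 - 1 / real p = (real (p\<^sup>2 * m) - real (p * m)) / real (p\<^sup>2 * m)"
    using \<open>0 < m\<close> by (simp add: field_simps power2_eq_square)
  also have "\<dots> \<le> real (V (n + 1)) / real (p\<^sup>2 * m)"
  proof (rule divide_right_mono)
    have "p * m \<le> p\<^sup>2 * m"
      by (simp add: power2_eq_square)
    moreover have "real (p\<^sup>2 * m - p * m) \<le> real (V (n + 1))"
      using lower by (rule of_nat_mono)
    ultimately show "real (p\<^sup>2 * m) - real (p * m) \<le> real (V (n + 1))"
      by (simp add: of_nat_diff)
  qed simp
  also have "\<dots> \<le> real (V (n + 1)) / real n"
  proof (rule divide_left_mono)
    show "real n \<le> real (p\<^sup>2 * m)"
      using n1 by (simp only: of_nat_le_iff)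
    show "0 < real (p\<^sup>2 * m) * real n"
      using n1 \<open>9 * 1 \<le> p\<^sup>2 * m\<close> \<open>0 < m\<close> \<open>0 < real p\<close> by simp
  qed simp
  finally show "1 - 1 / real p \<le> V_ratio (p\<^sup>2 * m - 1)"
    unfolding n_def[symmetric] V_ratio_def Vn .
qed

lemma setA_V_ratio_near_one:
  assumes "0 < \<epsilon>"
  shows "\<exists>n \<ge> N. n \<in> setA \<and> V_ratio n < 1 + \<epsilon>"
proof -
  obtain n where n: "max N (nat \<lceil>1 / \<epsilon>\<rceil> + 1) \<le> n" "squarefree n" "squarefree (n + 1)"
    using squarefree_consecutive_unbounded by blast
  have "0 < 1 / \<epsilon>"
    using assms by simp
  moreover from n(1) have "1 / \<epsilon> < real n"
    by linarith
  ultimately have "inverse (real n) < inverse (1 / \<epsilon>)"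
    by (intro less_imp_inverse_less)
  then have "1 / real n < \<epsilon>"
    by (simp add: inverse_eq_divide)
  then show ?thesis
    using n by (intro exI[of _ n]) (auto simp: mem_setA_iff V_ratio_squarefree_pair)
qed

lemma setB_V_ratio_near_one:
  assumes "0 < \<epsilon>"
  shows "\<exists>n \<ge> N. n \<in> setB \<and> 1 - \<epsilon> < V_ratio n"
proof -
  obtain p :: nat where "prime p" and p_gt: "max 2 (nat \<lceil>1 / \<epsilon>\<rceil>) < p"
    using bigger_prime by blast
  have "0 < 1 / \<epsilon>"
    using assms by simp
  moreover from p_gt have "1 / \<epsilon> < real p"
    by linarith
  ultimately have "inverse (real p) < inverse (1 / \<epsilon>)"
    by (intro less_imp_inverse_less)
  then have "1 / real p < \<epsilon>"
    by (simp add: inverse_eq_divide)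
  have "3 \<le> p"
    using p_gt by simp
  obtain m where m: "N \<le> m" "squarefree m" "squarefree (p\<^sup>2 * m - 1)"
    using squarefree_pred_prime_square_mult_unbounded[OF \<open>prime p\<close>] by blast
  have "m \<noteq> 0"
    by (rule notI) (use m(2) in simp)
  moreover have "1 < p\<^sup>2"
    using one_less_power[of p 2] \<open>3 \<le> p\<close> by simp
  ultimately have "m < p\<^sup>2 * m"
    by simp
  then have "N \<le> p\<^sup>2 * m - 1" and "1 \<le> p\<^sup>2 * m - 1"
    using m(1) \<open>m \<noteq> 0\<close> by linarith+
  then show ?thesis
    using V_ratio_pred_prime_square_mult[OF \<open>prime p\<close> \<open>3 \<le> p\<close> m(2,3)] \<open>1 / real p < \<epsilon>\<close>
    by (intro exI[of _ "p\<^sup>2 * m - 1"]) (auto simp: mem_setB_iff)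
qed

lemma frequently_sequentially_principal_iff:
  "(\<exists>\<^sub>F n in inf sequentially (principal S). P n) \<longleftrightarrow> (\<forall>N. \<exists>n \<ge> N. n \<in> S \<and> P n)"
  by (auto simp: frequently_def eventually_inf_principal eventually_sequentially)

lemma Liminf_eq_if_frequently_near:
  fixes f :: "'a \<Rightarrow> real"
  assumes "\<forall>\<^sub>F x in F. c \<le> f x" and "\<And>\<epsilon>. 0 < \<epsilon> \<Longrightarrow> \<exists>\<^sub>F x in F. f x < c + \<epsilon>"
  shows "Liminf F (\<lambda>x. ereal (f x)) = ereal c"
proof (rule antisym)
  show "ereal c \<le> Liminf F (\<lambda>x. ereal (f x))"
    using assms(1) by (intro Liminf_bounded) simp
  show "Liminf F (\<lambda>x. ereal (f x)) \<le> ereal c"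
  proof (rule ccontr)
    assume "\<not> ?thesis"
    then obtain r where "c < r" and "ereal r < Liminf F (\<lambda>x. ereal (f x))"
      using ereal_dense2[of "ereal c" "Liminf F (\<lambda>x. ereal (f x))"] by (auto simp: not_le)
    then have "\<forall>\<^sub>F x in F. r < f x"
      using less_LiminfD by fastforce
    moreover have "\<exists>\<^sub>F x in F. f x < r"
      using assms(2)[of "r - c"] \<open>c < r\<close> by simp
    ultimately show False
      by (simp add: frequently_def eventually_mono not_less less_imp_le)
  qed
qed

lemma Limsup_eq_if_frequently_near:
  fixes f :: "'a \<Rightarrow> real"
  assumes "\<forall>\<^sub>F x in F. f x \<le> c" and "\<And>\<epsilon>. 0 < \<epsilon> \<Longrightarrow> \<exists>\<^sub>F x in F. c - \<epsilon> < f x"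
  shows "Limsup F (\<lambda>x. ereal (f x)) = ereal c"
proof -
  have "Liminf F (\<lambda>x. ereal (- f x)) = ereal (- c)"
  proof (rule Liminf_eq_if_frequently_near)
    show "\<forall>\<^sub>F x in F. - c \<le> - f x"
      using assms(1) by simp
    show "\<exists>\<^sub>F x in F. - f x < - c + \<epsilon>" if "0 < \<epsilon>" for \<epsilon>
      using assms(2)[OF that] by (rule frequently_elim1) simp
  qed
  then have "- Limsup F (\<lambda>x. ereal (f x)) = ereal (- c)"
    using ereal_Liminf_uminus[of F "\<lambda>x. ereal (f x)"] by simp
  then show ?thesis
    by (simp add: ereal_uminus_eq_reorder)
qed

theorem proposition2:
  shows "infinite setA \<and> infinite setB \<and>
    Liminf (inf sequentially (principal setA)) (\<lambda>n. ereal (real (V (n+1)) / real (V n))) = 1 \<and>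
    Limsup (inf sequentially (principal setB)) (\<lambda>n. ereal (real (V (n+1)) / real (V n))) = 1"
proof -
  have near_A: "\<exists>\<^sub>F n in inf sequentially (principal setA). V_ratio n < 1 + \<epsilon>" if "0 < \<epsilon>" for \<epsilon>
    using setA_V_ratio_near_one[OF that] by (simp add: frequently_sequentially_principal_iff)
  have near_B: "\<exists>\<^sub>F n in inf sequentially (principal setB). 1 - \<epsilon> < V_ratio n" if "0 < \<epsilon>" for \<epsilon>
    using setB_V_ratio_near_one[OF that] by (simp add: frequently_sequentially_principal_iff)
  have "infinite setA" and "infinite setB"
    using setA_V_ratio_near_one[of 1] setB_V_ratio_near_one[of 1]
    by (auto simp: infinite_nat_iff_unbounded_le)
  moreover have "Liminf (inf sequentially (principal setA)) (\<lambda>n. ereal (V_ratio n)) = ereal 1"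
    using near_A by (intro Liminf_eq_if_frequently_near) (auto simp: eventually_inf_principal mem_setA_iff)
  moreover have "Limsup (inf sequentially (principal setB)) (\<lambda>n. ereal (V_ratio n)) = ereal 1"
    using near_B by (intro Limsup_eq_if_frequently_near) (auto simp: eventually_inf_principal mem_setB_iff)
  ultimately show ?thesis
    by (simp add: V_ratio_def)
qed

end
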